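(* Let $(X,d_X)$, $\delta,\epsilon,R$ and $F\colon\mathbb{H}^n\to X$ satisfy hypotheses (1)–(4) of the following criterion: (1) each $F\circ\eta_x$ is a geodesic; (2) for distinct $x,x'$, $F\circ\eta_x$ and $F\circ\eta_{x'}$ are two sides of an ideal $\delta$-slim triangle in $X$; (3) $e^{-t}|x-x'|<\epsilon$ implies $d_X(F(x,t),F(x',t))\le R$; (4) $e^{-t_k}|x_k-x_k'|\to\infty$ implies $d_X(F(x_k,t_k),F(x_k',t_k))\to\infty$. Put $\Delta=\max\{3\delta,\,2R/\epsilon+R\}$. Then for every vertical triangle $T=\mathcal{P}\cup\mathcal{Q}\cup\mathcal{R}\subset\mathbb{H}^n$, with $x=x(\mathcal{P})$, $x'=x(\mathcal{Q})$, $$d_X\big(F(x,h_T),F(x',h_T)\big)\le 3\Delta.$$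
   Context: Exponential model $\mathbb{H}^n=\mathbb{R}^{n-1}\times\mathbb{R}$, coordinates $(x,t)$, metric $e^{-2t}|dx|^2+dt^2$; vertical geodesics $\eta_x(t)=(x,t)$. An ideal $\delta$-slim triangle: three bi-infinite geodesics forming an ideal triangle, each side in the closed $\delta$-neighborhood of the union of the other two. A vertical triangle $T=\mathcal{P}\cup\mathcal{Q}\cup\mathcal{R}$ is an ideal triangle in $\mathbb{H}^n$ whose sides $\mathcal{P}=\eta_x(\mathbb{R})$, $\mathcal{Q}=\eta_{x'}(\mathbb{R})$ ($x\neq x'$) are vertical and whose third side $\mathcal{R}$ joins their other endpoints; $x(\mathcal{P})=x$, $x(\mathcal{Q})=x'$. The midpoint $r$ of $\mathcal{R}$ is the point of $\mathcal{R}$ with maximal $t$-coordinate $t(r)$ (so $e^{-t(r)}|x-x'|=2$). The displaced height of $T$ is $h_T=\min\{t\in\mathbb{R} : d_X(F(x,t),F(\mathcal{Q}))\le\Delta \text{ or } d_X(F(\mathcal{P}),F(x',t))\le\Delta\}$, a finite number satisfying $h_T\le t(r)$. *)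

theory Defs
  imports "HOL-Analysis.Analysis"
begin

definition geodesic_line :: "(real \<Rightarrow> 'a::metric_space) \<Rightarrow> bool" where
  "geodesic_line g \<longleftrightarrow> (\<forall>s t. dist (g s) (g t) = \<bar>s - t\<bar>)"

text \<open>The forward end of g and the backward end of h define the same point at infinity:
  the rays t \<mapsto> g t and t \<mapsto> h (-t), t \<ge> 0, are asymptotic (stay at bounded distance).\<close>
definition ends_asymptotic :: "(real \<Rightarrow> 'a::metric_space) \<Rightarrow> (real \<Rightarrow> 'a) \<Rightarrow> bool" where
  "ends_asymptotic g h \<longleftrightarrow> (\<exists>C. \<forall>t\<ge>0. dist (g t) (h (- t)) \<le> C)"

text \<open>Ideal triangle with sides a, b, c (bi-infinite geodesics, each with either orientation):
  consecutive sides share an endpoint at infinity.\<close>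
definition ideal_triangle :: "(real \<Rightarrow> 'a::metric_space) \<Rightarrow> (real \<Rightarrow> 'a) \<Rightarrow> (real \<Rightarrow> 'a) \<Rightarrow> bool" where
  "ideal_triangle a b c \<longleftrightarrow> geodesic_line a \<and> geodesic_line b \<and> geodesic_line c \<and>
     (\<exists>sa sb sc. sa \<in> {1, -1} \<and> sb \<in> {1, -1} \<and> sc \<in> {1, -1} \<and>
        ends_asymptotic (\<lambda>t. a (sa * t)) (\<lambda>t. b (sb * t)) \<and>
        ends_asymptotic (\<lambda>t. b (sb * t)) (\<lambda>t. c (sc * t)) \<and>
        ends_asymptotic (\<lambda>t. c (sc * t)) (\<lambda>t. a (sa * t)))"

definition slim_triangle :: "real \<Rightarrow> (real \<Rightarrow> 'a::metric_space) \<Rightarrow> (real \<Rightarrow> 'a) \<Rightarrow> (real \<Rightarrow> 'a) \<Rightarrow> bool" where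
  "slim_triangle \<delta> a b c \<longleftrightarrow>
     (\<forall>s. infdist (a s) (range b \<union> range c) \<le> \<delta>) \<and>
     (\<forall>s. infdist (b s) (range a \<union> range c) \<le> \<delta>) \<and>
     (\<forall>s. infdist (c s) (range a \<union> range b) \<le> \<delta>)"

definition ideal_slim_triangle :: "real \<Rightarrow> (real \<Rightarrow> 'a::metric_space) \<Rightarrow> (real \<Rightarrow> 'a) \<Rightarrow> (real \<Rightarrow> 'a) \<Rightarrow> bool" where
  "ideal_slim_triangle \<delta> a b c \<longleftrightarrow> ideal_triangle a b c \<and> slim_triangle \<delta> a b c"

text \<open>Exponential model of H^n = R^(n-1) x R; the R^(n-1) factor is real^'n.
  Vertical geodesic eta_x(t) = (x,t).\<close>
definition vert :: "real^'n \<Rightarrow> real \<Rightarrow> (real^'n) \<times> real" where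
  "vert x t = (x, t)"

definition displaced_height ::
  "((real^'n) \<times> real \<Rightarrow> 'a::metric_space) \<Rightarrow> real \<Rightarrow> real^'n \<Rightarrow> real^'n \<Rightarrow> real" where
  "displaced_height F \<Delta> x x' =
     (LEAST t. infdist (F (x, t)) (range (\<lambda>s. F (x', s))) \<le> \<Delta> \<or>
               infdist (F (x', t)) (range (\<lambda>s. F (x, s))) \<le> \<Delta>)"

end

theory Submission
  imports Defs
begin

(* Write g = F o eta_x and h = F o eta_x' for the images of the two
   vertical sides.  Hypothesis (3) makes g and h come within R of each other at
   arbitrarily large heights, and for two geodesic lines with this property a point g t
   that is D-close to the whole line h is already (2D + R)-close to the point h t at the
   same height.  At the displaced height h_T one of the two lines is Delta-close to the
   other, so d(g h_T, h h_T) <= 2 Delta + R <= 3 Delta, because R <= Delta.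
   What remains is to see that h_T really is attained as a least element: the set of
   heights at which the displacement condition holds is closed (the lines are continuous),
   nonempty (by (3)), and bounded below, since by (4) the lines drift apart as t -> -oo. *)

lemma geodesic_line_continuous: "geodesic_line g \<Longrightarrow> continuous_on UNIV g"
  unfolding continuous_on_iff geodesic_line_def
  by (metis dist_real_def)

text \<open>If g t lies within D of the point h s, the triangle inequality at a late time T where
  the two lines are R-close forces |s - t| \<le> D + R; hence g t is (2D + R)-close to h t.\<close>
lemma geodesic_lines_close_same_time:
  fixes g h :: "real \<Rightarrow> 'a::metric_space"
  assumes g: "geodesic_line g" and h: "geodesic_line h"
    and late_close: "\<And>t. \<exists>T\<ge>t. dist (g T) (h T) \<le> R"
    and close: "dist (g t) (h s) \<le> D"
  shows "dist (g t) (h t) \<le> 2 * D + R"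
proof -
  obtain T where T: "T \<ge> max t s" "dist (g T) (h T) \<le> R" using late_close by blast
  have gT: "dist (g t) (g T) = T - t" and hT: "dist (h s) (h T) = T - s"
    using g h T(1) by (auto simp: geodesic_line_def)
  have "dist (h s) (h T) \<le> dist (h s) (g t) + dist (g t) (g T) + dist (g T) (h T)"
    using dist_triangle[of "h s" "h T" "g t"] dist_triangle[of "g t" "h T" "g T"] by linarith
  hence t_minus_s: "t - s \<le> D + R" using T(2) close gT hT by (simp add: dist_commute)
  have "dist (g t) (g T) \<le> dist (g t) (h s) + dist (h s) (h T) + dist (h T) (g T)"
    using dist_triangle[of "g t" "g T" "h s"] dist_triangle[of "h s" "g T" "h T"] by linarith
  hence s_minus_t: "s - t \<le> D + R" using T(2) close gT hT by (simp add: dist_commute)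
  have "dist (g t) (h t) \<le> dist (g t) (h s) + dist (h s) (h t)" by (rule dist_triangle)
  also have "\<dots> \<le> D + \<bar>s - t\<bar>" using close h by (simp add: geodesic_line_def)
  finally show ?thesis using t_minus_s s_minus_t by linarith
qed

lemma geodesic_lines_infdist_same_time:
  fixes g h :: "real \<Rightarrow> 'a::metric_space"
  assumes g: "geodesic_line g" and h: "geodesic_line h"
    and late_close: "\<And>t. \<exists>T\<ge>t. dist (g T) (h T) \<le> R"
    and close: "infdist (g t) (range h) \<le> D"
  shows "dist (g t) (h t) \<le> 2 * D + R"
proof (rule field_le_epsilon)
  fix e :: real assume e: "e > 0"
  have "(INF p\<in>range h. dist (g t) p) < D + e / 2"
    using close e by (simp add: infdist_notempty)
  then obtain s where "dist (g t) (h s) < D + e / 2"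
    by (auto simp: cINF_less_iff)
  from geodesic_lines_close_same_time[OF g h late_close less_imp_le[OF this]]
  show "dist (g t) (h t) \<le> 2 * D + R + e" by simp
qed

text \<open>A nonempty, closed, bounded-below set of reals contains its infimum, which is then
  the least element; this is what makes the displaced height a genuine minimum.\<close>
lemma Least_of_closed_bdd_below:
  fixes P :: "real \<Rightarrow> bool"
  assumes ne: "\<exists>t. P t" and cl: "closed {t. P t}" and bdd: "bdd_below {t. P t}"
  shows "P (LEAST t. P t)"
proof -
  have "Inf {t. P t} \<in> {t. P t}"
    using closed_contains_Inf[OF _ bdd cl] ne by blast
  hence "(LEAST t. P t) = Inf {t. P t}"
    using bdd by (intro Least_equality) (auto intro: cInf_lower)
  with \<open>Inf {t. P t} \<in> {t. P t}\<close> show ?thesis by simp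
qed

text \<open>Hypothesis (3): two vertical lines come R-close at arbitrarily large heights, since
  e^{-T} |x - x'| < \<epsilon> once T is large.\<close>
lemma vertical_lines_close_late:
  fixes F :: "(real^'n) \<times> real \<Rightarrow> 'a::metric_space"
  assumes eps_pos: "\<epsilon> > 0"
    and H3: "\<And>x x' t. exp (- t) * norm (x - x') < \<epsilon> \<Longrightarrow> dist (F (x, t)) (F (x', t)) \<le> R"
  shows "\<exists>T\<ge>t. dist (F (x, T)) (F (x', T)) \<le> R"
proof (cases "x = x'")
  case True
  then show ?thesis using H3[of t x x] eps_pos by auto
next
  case False
  define n where "n = norm (x - x')"
  have n: "n > 0" using False by (simp add: n_def)
  define T where "T = \<bar>t\<bar> + \<bar>ln (\<epsilon> / n)\<bar> + 1"
  have "exp (- T) < exp (ln (\<epsilon> / n))" unfolding T_def by simp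
  hence "exp (- T) * n < \<epsilon>" using eps_pos n by (simp add: field_simps)
  moreover have "T \<ge> t" unfolding T_def by simp
  ultimately show ?thesis using H3[of T x x'] by (auto simp: n_def)
qed

text \<open>Hypothesis (4): as t \<rightarrow> -\<infinity> the quantity e^{-t} |x - x'| blows up, so the vertical
  lines over x \<noteq> x' drift apart; any set of heights where they stay B-close is bounded
  below.\<close>
lemma vertical_lines_close_bdd_below:
  fixes F :: "(real^'n) \<times> real \<Rightarrow> 'a::metric_space"
  assumes H4: "\<And>xs xs' ts. filterlim (\<lambda>k. exp (- ts k) * norm (xs k - xs' k)) at_top sequentially \<Longrightarrow>
               filterlim (\<lambda>k. dist (F (xs k, ts k)) (F (xs' k, ts k))) at_top sequentially"
    and x_ne: "x \<noteq> x'"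
    and close: "\<And>t. P t \<Longrightarrow> dist (F (x, t)) (F (x', t)) \<le> B"
  shows "bdd_below {t. P t}"
proof (rule ccontr)
  assume "\<not> bdd_below {t. P t}"
  hence "\<exists>t. P t \<and> t \<le> - real k" for k :: nat
    unfolding bdd_below_def by (metis mem_Collect_eq nle_le)
  then obtain ts where ts: "\<And>k. P (ts k)" "\<And>k. ts k \<le> - real k" by metis
  define n where "n = norm (x - x')"
  have n: "n > 0" using x_ne by (simp add: n_def)
  have "real k * n \<le> exp (- ts k) * n" for k
  proof -
    have "real k \<le> exp (real k)" using exp_ge_add_one_self[of "real k"] by linarith
    also have "\<dots> \<le> exp (- ts k)" using ts(2)[of k] by simp
    finally show ?thesis using n by (simp add: mult_right_mono)
  qed
  moreover have "filterlim (\<lambda>k. real k * n) at_top sequentially"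
    by (rule filterlim_at_top_mult_tendsto_pos[OF tendsto_const n filterlim_real_sequentially])
  ultimately have "filterlim (\<lambda>k. exp (- ts k) * norm (x - x')) at_top sequentially"
    by (auto simp: n_def intro: filterlim_at_top_mono)
  from H4[of ts "\<lambda>_. x" "\<lambda>_. x'", OF this]
  have "\<forall>\<^sub>F k in sequentially. dist (F (x, ts k)) (F (x', ts k)) \<ge> B + 1"
    by (simp add: filterlim_at_top)
  then obtain k where "dist (F (x, ts k)) (F (x', ts k)) \<ge> B + 1"
    by (meson eventually_sequentially order_refl)
  with close[OF ts(1)[of k]] show False by linarith
qed

text \<open>The displacement condition holds at some height (where the lines
  are R-close), on a closed set, which is bounded below by hypothesis (4).\<close>
lemma dist_at_displaced_height:
  fixes F :: "(real^'n) \<times> real \<Rightarrow> 'a::metric_space"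
  assumes eps_pos: "\<epsilon> > 0"
    and H1: "\<And>x. geodesic_line (F \<circ> vert x)"
    and H3: "\<And>x x' t. exp (- t) * norm (x - x') < \<epsilon> \<Longrightarrow> dist (F (x, t)) (F (x', t)) \<le> R"
    and H4: "\<And>xs xs' ts. filterlim (\<lambda>k. exp (- ts k) * norm (xs k - xs' k)) at_top sequentially \<Longrightarrow>
               filterlim (\<lambda>k. dist (F (xs k, ts k)) (F (xs' k, ts k))) at_top sequentially"
    and x_ne: "x \<noteq> x'"
    and R_le: "R \<le> \<Delta>"
  shows "dist (F (x, displaced_height F \<Delta> x x')) (F (x', displaced_height F \<Delta> x x'))
           \<le> 2 * \<Delta> + R"
proof -
  define g where "g = (\<lambda>t. F (x, t))"
  define h where "h = (\<lambda>t. F (x', t))"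
  have g: "geodesic_line g" and h: "geodesic_line h"
    using H1[of x] H1[of x'] by (auto simp: g_def h_def comp_def vert_def)
  have g_late: "\<exists>T\<ge>t. dist (g T) (h T) \<le> R" for t
    using vertical_lines_close_late[where F = F and R = R, OF eps_pos H3] by (simp add: g_def h_def)
  hence h_late: "\<exists>T\<ge>t. dist (h T) (g T) \<le> R" for t
    by (simp add: dist_commute)
  define P where "P = (\<lambda>t. infdist (g t) (range h) \<le> \<Delta> \<or> infdist (h t) (range g) \<le> \<Delta>)"
  have P_close: "P t \<Longrightarrow> dist (g t) (h t) \<le> 2 * \<Delta> + R" for t
    unfolding P_def
    using geodesic_lines_infdist_same_time[OF g h g_late]
          geodesic_lines_infdist_same_time[OF h g h_late]
    by (auto simp: dist_commute)
  have "\<exists>t. P t"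
  proof -
    obtain T where "dist (g T) (h T) \<le> R" using g_late by blast
    hence "infdist (g T) (range h) \<le> \<Delta>" using R_le by (meson infdist_le2 order_trans rangeI)
    thus ?thesis by (auto simp: P_def)
  qed
  moreover have "closed {t. P t}"
    unfolding P_def Collect_disj_eq
    by (intro closed_Un closed_Collect_le continuous_on_infdist geodesic_line_continuous
          g h continuous_on_const)
  moreover have "bdd_below {t. P t}"
  proof (rule vertical_lines_close_bdd_below[where F = F, OF H4 x_ne])
    show "dist (F (x, t)) (F (x', t)) \<le> 2 * \<Delta> + R" if "P t" for t
      using P_close[OF that] by (simp add: g_def h_def)
  qed
  ultimately have "P (LEAST t. P t)" by (rule Least_of_closed_bdd_below)
  moreover have "displaced_height F \<Delta> x x' = (LEAST t. P t)"
    by (simp add: displaced_height_def P_def g_def h_def)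
  ultimately show ?thesis using P_close by (simp add: g_def h_def)
qed

theorem claim2p3:
  fixes F :: "(real^'n) \<times> real \<Rightarrow> 'a::metric_space"
    and \<delta> \<epsilon> R :: real
  assumes eps_pos: "\<epsilon> > 0"
    and H1: "\<And>x. geodesic_line (F \<circ> vert x)"
    and H2: "\<And>x x'. x \<noteq> x' \<Longrightarrow> \<exists>c. ideal_slim_triangle \<delta> (F \<circ> vert x) (F \<circ> vert x') c"
    and H3: "\<And>x x' t. exp (- t) * norm (x - x') < \<epsilon> \<Longrightarrow> dist (F (x, t)) (F (x', t)) \<le> R"
    and H4: "\<And>xs xs' ts. filterlim (\<lambda>k. exp (- ts k) * norm (xs k - xs' k)) at_top sequentially \<Longrightarrow>
               filterlim (\<lambda>k. dist (F (xs k, ts k)) (F (xs' k, ts k))) at_top sequentially"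
    and x_ne: "x \<noteq> x'"
  shows "dist (F (x, displaced_height F (max (3 * \<delta>) (2 * R / \<epsilon> + R)) x x'))
               (F (x', displaced_height F (max (3 * \<delta>) (2 * R / \<epsilon> + R)) x x'))
           \<le> 3 * max (3 * \<delta>) (2 * R / \<epsilon> + R)"
proof -
  define \<Delta> where "\<Delta> = max (3 * \<delta>) (2 * R / \<epsilon> + R)"
  have "R \<ge> 0"
    using vertical_lines_close_late[where F = F and R = R and t = 0 and x = x and x' = x, OF eps_pos H3]
    by (meson order_trans zero_le_dist)
  hence "R \<le> \<Delta>"
    using eps_pos by (simp add: \<Delta>_def le_max_iff_disj)
  have "dist (F (x, displaced_height F \<Delta> x x')) (F (x', displaced_height F \<Delta> x x'))
          \<le> 2 * \<Delta> + R"
    using eps_pos H1 H3 H4 x_ne \<open>R \<le> \<Delta>\<close> by (rule dist_at_displaced_height)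
  also have "\<dots> \<le> 3 * \<Delta>" using \<open>R \<le> \<Delta>\<close> by linarith
  finally show ?thesis unfolding \<Delta>_def .
qed

end
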